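(* Let $(E,\mathcal{I})$ be the partition matroid given by a partition $E_1,\dots,E_b$ of $E$ and positive integers $k_z\le|E_z|$. Suppose $f:2^E\times O^E\to\mathbb{R}_{\ge0}$ is adaptive monotone and adaptive submodular with respect to $p(\phi)$. Then the adaptive hybrid policy $\pi^m=\pi^{mw}@\pi^{ma}$ satisfies $f_{avg}(\pi^*_{avg})\le 3\,f_{avg}(\pi^m)$, where $\pi^*_{avg}$ maximizes $f_{avg}(\pi)$ over policies $\pi$ with $E(\pi,\phi)\in\mathcal{I}$ for all $\phi\in U^+$.
   Context: Setting. $E$ is a finite set of $n$ items and $O$ a finite set of states. A realization is a function $\phi:E\to O$; $p$ is a probability distribution (prior) on the set of all realizations, $\Phi$ denotes a random realization with law $p$, and $U^+=\{\phi: p(\phi)>0\}$. A partial realization is a function $\psi:S\to O$ with $S\subseteq E$, $\mathrm{dom}(\psi)=S$; it is identified with the set of pairs $\{(e,\psi(e)):e\in S\}$, so $\psi\subseteq\psi'$ means $\mathrm{dom}(\psi)\subseteq\mathrm{dom}(\psi')$ and they agree on $\mathrm{dom}(\psi)$. A realization $\phi$ is consistent with $\psi$, written $\phi\sim\psi$, if it agrees with $\psi$ on $\mathrm{dom}(\psi)$. Only partial realizations with $\Pr[\Phi\sim\psi]>0$ are considered, and $p(\phi\mid\psi)=\Pr[\Phi=\phi\mid\Phi\sim\psi]$. For $S\subseteq E$ and a partial realization $\psi$, $f(S,\psi)=\mathbb{E}[f(S,\Phi)\mid\Phi\sim\psi]$. For $e\notin\mathrm{dom}(\psi)$, let $O(e,\psi)=\{o\in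 O:\exists\phi\text{ with }p(\phi\mid\psi)>0,\ \phi(e)=o\}$ and define the worst-case marginal utility $f_{wc}(e\mid\psi)=\min_{o\in O(e,\psi)}\{f(\mathrm{dom}(\psi)\cup\{e\},\psi\cup\{(e,o)\})-f(\mathrm{dom}(\psi),\psi)\}$ and the expected marginal utility $f_{avg}(e\mid\psi)=\mathbb{E}[f(\mathrm{dom}(\psi)\cup\{e\},\Phi)-f(\mathrm{dom}(\psi),\Phi)\mid\Phi\sim\psi]$. $f$ is adaptive submodular if $f_{avg}(e\mid\psi)\ge f_{avg}(e\mid\psi')$ for all partial realizations $\psi\subseteq\psi'$ and $e\in E\setminus\mathrm{dom}(\psi')$, and adaptive monotone if $f_{avg}(e\mid\psi)\ge0$ for all $\psi$ and $e\notin\mathrm{dom}(\psi)$. Policies. A (deterministic) policy $\pi$ is a rule which, given the current observation (the partial realization of the items selected so far), either selects a new item or stops; after an item $e$ is selected under realization $\phi$, the state $\phi(e)$ is observed. $E(\pi,\phi)$ is the set of items selected by $\pi$ under $\phi$, and $f_{avg}(\pi)=\mathbb{E}[f(E(\pi,\Phi),\Phi)]$. The concatenation $\pi@\pi'$ runs $\pi$ and then runs $\pi'$ from scratch, ignoring the observations obtained by $\pi$; its selected set is the union of the two. Partition matroid: $\mathcal{I}=\{I\subseteq E:|I\cap E_z|\le k_z\ \forall z\in[b]\}$. Policy $\pi^{mw}$: starting from the empty observation $\psi=\emptyset$, for $z=1,\dots,b$ in turn, perform $\lfloor k_z/2\rfloor$ iterations, each selecting $e\in\arg\max_{e\in E_z\setminus\mathrm{dom}(\psi)}f_{wc}(e\mid\psi)$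 for the current observation $\psi$, observing $\Phi(e)$ and adding $(e,\Phi(e))$ to $\psi$. Policy $\pi^{ma}$: identical except that each meta-round $z$ performs $\lceil k_z/2\rceil$ iterations and uses $f_{avg}(e\mid\psi)$ in place of $f_{wc}(e\mid\psi)$. Ties are broken arbitrarily. $\pi^m=\pi^{mw}@\pi^{ma}$. *)

theory Defs
  imports "HOL-Probability.Probability"
begin

text \<open>Ground set of items = the finite type 'e; states = the finite type 'o.
  Realizations are total functions 'e => 'o, the prior is a pmf on them.
  Partial realizations are maps 'e => 'o option (subset = map_le).\<close>

definition consistent :: "('e \<Rightarrow> 'o) \<Rightarrow> ('e \<rightharpoonup> 'o) \<Rightarrow> bool" where
  "consistent \<phi> \<psi> \<longleftrightarrow> (\<forall>e\<in>dom \<psi>. \<psi> e = Some (\<phi> e))"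

definition prob_cons :: "('e \<Rightarrow> 'o) pmf \<Rightarrow> ('e \<rightharpoonup> 'o) \<Rightarrow> real" where
  "prob_cons p \<psi> = measure_pmf.prob p {\<phi>. consistent \<phi> \<psi>}"

definition cexp :: "('e::finite \<Rightarrow> 'o::finite) pmf \<Rightarrow> ('e \<rightharpoonup> 'o) \<Rightarrow> (('e \<Rightarrow> 'o) \<Rightarrow> real) \<Rightarrow> real" where
  "cexp p \<psi> X = (\<Sum>\<phi>\<in>{\<phi>. consistent \<phi> \<psi>}. pmf p \<phi> * X \<phi>) / prob_cons p \<psi>"

definition fpart :: "('e::finite \<Rightarrow> 'o::finite) pmf \<Rightarrow> ('e set \<Rightarrow> ('e \<Rightarrow> 'o) \<Rightarrow> real)
    \<Rightarrow> 'e set \<Rightarrow> ('e \<rightharpoonup> 'o) \<Rightarrow> real" where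
  "fpart p f S \<psi> = cexp p \<psi> (f S)"

definition favg_marg :: "('e::finite \<Rightarrow> 'o::finite) pmf \<Rightarrow> ('e set \<Rightarrow> ('e \<Rightarrow> 'o) \<Rightarrow> real)
    \<Rightarrow> 'e \<Rightarrow> ('e \<rightharpoonup> 'o) \<Rightarrow> real" where
  "favg_marg p f e \<psi> = cexp p \<psi> (\<lambda>\<phi>. f (insert e (dom \<psi>)) \<phi> - f (dom \<psi>) \<phi>)"

definition ostates :: "('e \<Rightarrow> 'o) pmf \<Rightarrow> 'e \<Rightarrow> ('e \<rightharpoonup> 'o) \<Rightarrow> 'o set" where
  "ostates p e \<psi> = {s. \<exists>\<phi>. pmf p \<phi> > 0 \<and> consistent \<phi> \<psi> \<and> \<phi> e = s}"

definition fwc_marg :: "('e::finite \<Rightarrow> 'o::finite) pmf \<Rightarrow> ('e set \<Rightarrow> ('e \<Rightarrow> 'o) \<Rightarrow> real)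
    \<Rightarrow> 'e \<Rightarrow> ('e \<rightharpoonup> 'o) \<Rightarrow> real" where
  "fwc_marg p f e \<psi> =
     Min ((\<lambda>s. fpart p f (insert e (dom \<psi>)) (\<psi>(e \<mapsto> s)) - fpart p f (dom \<psi>) \<psi>) ` ostates p e \<psi>)"

definition adaptive_submodular :: "('e::finite \<Rightarrow> 'o::finite) pmf \<Rightarrow> ('e set \<Rightarrow> ('e \<Rightarrow> 'o) \<Rightarrow> real) \<Rightarrow> bool" where
  "adaptive_submodular p f \<longleftrightarrow>
     (\<forall>\<psi> \<psi>' e. \<psi> \<subseteq>\<^sub>m \<psi>' \<and> prob_cons p \<psi>' > 0 \<and> e \<notin> dom \<psi>' \<longrightarrow>
        favg_marg p f e \<psi> \<ge> favg_marg p f e \<psi>')"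

definition adaptive_monotone :: "('e::finite \<Rightarrow> 'o::finite) pmf \<Rightarrow> ('e set \<Rightarrow> ('e \<Rightarrow> 'o) \<Rightarrow> real) \<Rightarrow> bool" where
  "adaptive_monotone p f \<longleftrightarrow>
     (\<forall>\<psi> e. prob_cons p \<psi> > 0 \<and> e \<notin> dom \<psi> \<longrightarrow> favg_marg p f e \<psi> \<ge> 0)"

text \<open>A deterministic policy maps the current observation to the next item (Some e) or stops (None).
  Selecting an already selected item does not change the observation (acts as stopping).\<close>
type_synonym ('e, 'o) policy = "('e \<rightharpoonup> 'o) \<Rightarrow> 'e option"

definition pstep :: "('e, 'o) policy \<Rightarrow> ('e \<Rightarrow> 'o) \<Rightarrow> ('e \<rightharpoonup> 'o) \<Rightarrow> ('e \<rightharpoonup> 'o)" where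
  "pstep \<pi> \<phi> \<psi> = (case \<pi> \<psi> of None \<Rightarrow> \<psi> | Some e \<Rightarrow> \<psi>(e \<mapsto> \<phi> e))"

definition prun :: "('e, 'o) policy \<Rightarrow> ('e \<Rightarrow> 'o) \<Rightarrow> nat \<Rightarrow> ('e \<rightharpoonup> 'o)" where
  "prun \<pi> \<phi> t = (pstep \<pi> \<phi> ^^ t) Map.empty"

text \<open>E(pi, phi): after card(E) steps the run has reached its final observation.\<close>
definition Esel :: "('e::finite, 'o) policy \<Rightarrow> ('e \<Rightarrow> 'o) \<Rightarrow> 'e set" where
  "Esel \<pi> \<phi> = dom (prun \<pi> \<phi> (card (UNIV :: 'e set)))"

definition favg_pol :: "('e::finite \<Rightarrow> 'o::finite) pmf \<Rightarrow> ('e set \<Rightarrow> ('e \<Rightarrow> 'o) \<Rightarrow> real)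
    \<Rightarrow> ('e, 'o) policy \<Rightarrow> real" where
  "favg_pol p f \<pi> = measure_pmf.expectation p (\<lambda>\<phi>. f (Esel \<pi> \<phi>) \<phi>)"

text \<open>f_avg of the concatenation pi @ pi': selected set is the union of the two.\<close>
definition favg_concat :: "('e::finite \<Rightarrow> 'o::finite) pmf \<Rightarrow> ('e set \<Rightarrow> ('e \<Rightarrow> 'o) \<Rightarrow> real)
    \<Rightarrow> ('e, 'o) policy \<Rightarrow> ('e, 'o) policy \<Rightarrow> real" where
  "favg_concat p f \<pi> \<pi>' = measure_pmf.expectation p (\<lambda>\<phi>. f (Esel \<pi> \<phi> \<union> Esel \<pi>' \<phi>) \<phi>)"

definition pm_indep :: "nat \<Rightarrow> (nat \<Rightarrow> 'e set) \<Rightarrow> (nat \<Rightarrow> nat) \<Rightarrow> 'e set \<Rightarrow> bool" where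
  "pm_indep b Ez k I \<longleftrightarrow> (\<forall>z\<in>{1..b}. card (I \<inter> Ez z) \<le> k z)"

definition feasible_policy :: "('e::finite \<Rightarrow> 'o) pmf \<Rightarrow> nat \<Rightarrow> (nat \<Rightarrow> 'e set) \<Rightarrow> (nat \<Rightarrow> nat)
    \<Rightarrow> ('e, 'o) policy \<Rightarrow> bool" where
  "feasible_policy p b Ez k \<pi> \<longleftrightarrow> (\<forall>\<phi>. pmf p \<phi> > 0 \<longrightarrow> pm_indep b Ez k (Esel \<pi> \<phi>))"

text \<open>Meta-round schedule: c z iterations in meta-round z; cum c z iterations in rounds 1..z.\<close>
definition cum :: "(nat \<Rightarrow> nat) \<Rightarrow> nat \<Rightarrow> nat" where
  "cum c z = (\<Sum>z'\<in>{1..z}. c z')"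

definition round_of :: "(nat \<Rightarrow> nat) \<Rightarrow> nat \<Rightarrow> nat" where
  "round_of c t = (LEAST z. t < cum c z)"

text \<open>pi is (some tie-breaking of) the meta-round greedy policy with score g and schedule c:
  along every run under phi in U+, at iteration t (in meta-round z) it selects an item of
  E_z not yet selected maximizing g(psi, .), and after all sum_z c z iterations it stops.\<close>
definition greedy_policy :: "('e::finite \<Rightarrow> 'o) pmf \<Rightarrow> nat \<Rightarrow> (nat \<Rightarrow> 'e set)
    \<Rightarrow> (('e \<rightharpoonup> 'o) \<Rightarrow> 'e \<Rightarrow> real) \<Rightarrow> (nat \<Rightarrow> nat) \<Rightarrow> ('e, 'o) policy \<Rightarrow> bool" where
  "greedy_policy p b Ez g c \<pi> \<longleftrightarrow>
     (\<forall>\<phi>. pmf p \<phi> > 0 \<longrightarrow>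
        (\<forall>t < cum c b.
           let \<psi> = prun \<pi> \<phi> t; z = round_of c t in
           \<exists>e. \<pi> \<psi> = Some e \<and> e \<in> Ez z - dom \<psi> \<and> (\<forall>e'\<in>Ez z - dom \<psi>. g \<psi> e' \<le> g \<psi> e))
        \<and> \<pi> (prun \<pi> \<phi> (cum c b)) = None)"

end

theory Submission
  imports Defs
begin

text \<open>Adaptive monotonicity gives \<open>f(\<pi>) \<le> f(\<pi>\<^sup>m\<^sup>a @ \<pi>)\<close> and \<open>f(\<pi>\<^sup>m\<^sup>a) \<le> f(\<pi>\<^sup>m)\<close>, so only
  the greedy half \<open>\<pi>\<^sup>m\<^sup>a\<close> matters. Run \<open>\<pi>\<close> after \<open>\<pi>\<^sup>m\<^sup>a\<close>: by the tower property the
  expected increase is the sum of the expected marginals of the items \<open>\<pi>\<close> adds, and by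
  adaptive submodularity each is at most its marginal with respect to the final
  observation of \<open>\<pi>\<^sup>m\<^sup>a\<close>. An item of block \<open>z\<close> that \<open>\<pi>\<^sup>m\<^sup>a\<close> did not pick has, again by
  submodularity, marginal at most each of the \<open>\<lceil>k\<^sub>z/2\<rceil>\<close> greedy gains of meta-round \<open>z\<close>,
  and \<open>\<pi>\<close> picks at most \<open>k\<^sub>z \<le> 2\<lceil>k\<^sub>z/2\<rceil>\<close> items of block \<open>z\<close>. Hence the increase is at most
  twice the total greedy gain \<open>f(\<pi>\<^sup>m\<^sup>a) - f(\<emptyset>) \<le> f(\<pi>\<^sup>m\<^sup>a)\<close>. In particular the
  worst-case rule of \<open>\<pi>\<^sup>m\<^sup>w\<close> and the bounds \<open>0 < k\<^sub>z \<le> |E\<^sub>z|\<close> are never used.\<close>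

section \<open>Runs of a policy\<close>

lemma prun_0 [simp]: "prun \<sigma> \<phi> 0 = Map.empty"
  by (simp add: prun_def)

lemma prun_Suc: "prun \<sigma> \<phi> (Suc t) = pstep \<sigma> \<phi> (prun \<sigma> \<phi> t)"
  by (simp add: prun_def)

lemma dom_pstep:
  "dom (pstep \<sigma> \<phi> \<psi>) = (case \<sigma> \<psi> of None \<Rightarrow> dom \<psi> | Some e \<Rightarrow> insert e (dom \<psi>))"
  unfolding pstep_def by (auto split: option.splits)

lemma prun_stop_policy: "prun (\<lambda>_. None) \<phi> t = Map.empty"
  by (induction t) (simp_all add: prun_Suc pstep_def)

lemma consistent_map_le: "consistent \<phi> \<psi>' \<Longrightarrow> \<psi> \<subseteq>\<^sub>m \<psi>' \<Longrightarrow> consistent \<phi> \<psi>"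
  unfolding consistent_def map_le_def by (metis domIff)

lemma consistent_agree: "consistent \<phi> \<psi> \<Longrightarrow> consistent \<phi>' \<psi> \<Longrightarrow> e \<in> dom \<psi> \<Longrightarrow> \<phi>' e = \<phi> e"
  unfolding consistent_def by force

lemma consistent_prun: "consistent \<phi> (prun \<sigma> \<phi> t)"
  by (induction t) (auto simp: prun_Suc pstep_def consistent_def split: option.splits)

lemma prun_map_le_Suc: "prun \<sigma> \<phi> t \<subseteq>\<^sub>m prun \<sigma> \<phi> (Suc t)"
  using consistent_prun[of \<phi> \<sigma> t]
  unfolding prun_Suc pstep_def consistent_def map_le_def by (auto split: option.splits)

lemma prun_map_le: "s \<le> t \<Longrightarrow> prun \<sigma> \<phi> s \<subseteq>\<^sub>m prun \<sigma> \<phi> t"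
  by (induction t rule: dec_induct) (auto intro: map_le_trans prun_map_le_Suc)

lemma prun_eq_if_consistent: "consistent \<phi>' (prun \<sigma> \<phi> t) \<Longrightarrow> prun \<sigma> \<phi>' t = prun \<sigma> \<phi> t"
proof (induction t)
  case (Suc t)
  have IH: "prun \<sigma> \<phi>' t = prun \<sigma> \<phi> t"
    using Suc consistent_map_le[OF Suc.prems prun_map_le_Suc] by blast
  show ?case
  proof (cases "\<sigma> (prun \<sigma> \<phi> t)")
    case (Some e)
    then have "e \<in> dom (prun \<sigma> \<phi> (Suc t))" by (simp add: prun_Suc dom_pstep)
    then have "\<phi>' e = \<phi> e" using consistent_agree[OF consistent_prun Suc.prems] by blast
    then show ?thesis by (simp add: prun_Suc IH pstep_def Some)
  qed (simp add: prun_Suc IH pstep_def)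
qed simp

lemma card_dom_prun:
  fixes \<sigma> :: "('e::finite, 'o) policy"
  assumes "\<forall>s<t. \<exists>e. \<sigma> (prun \<sigma> \<phi> s) = Some e \<and> e \<notin> dom (prun \<sigma> \<phi> s)"
  shows "card (dom (prun \<sigma> \<phi> t)) = t"
  using assms
proof (induction t)
  case (Suc t)
  then obtain e where "\<sigma> (prun \<sigma> \<phi> t) = Some e" "e \<notin> dom (prun \<sigma> \<phi> t)" by blast
  then show ?case using Suc by (simp add: prun_Suc dom_pstep)
qed simp

section \<open>Running a second policy after a first one\<close>

definition concat_obs :: "('e, 'o) policy \<Rightarrow> ('e, 'o) policy \<Rightarrow> nat \<Rightarrow> ('e \<Rightarrow> 'o) \<Rightarrow> nat \<Rightarrow> ('e \<rightharpoonup> 'o)"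
  where "concat_obs \<sigma> \<tau> m \<phi> i = prun \<sigma> \<phi> m ++ prun \<tau> \<phi> i"

lemma dom_concat_obs: "dom (concat_obs \<sigma> \<tau> m \<phi> i) = dom (prun \<sigma> \<phi> m) \<union> dom (prun \<tau> \<phi> i)"
  by (auto simp: concat_obs_def)

lemma consistent_concat_obs: "consistent \<phi> (concat_obs \<sigma> \<tau> m \<phi> i)"
  using consistent_prun[of \<phi> \<sigma> m] consistent_prun[of \<phi> \<tau> i]
  unfolding concat_obs_def consistent_def
  by (auto simp: map_add_def split: option.splits; metis domI option.inject)

lemma prun_map_le_concat_obs: "prun \<sigma> \<phi> m \<subseteq>\<^sub>m concat_obs \<sigma> \<tau> m \<phi> i"
  using consistent_prun[of \<phi> \<sigma> m] consistent_prun[of \<phi> \<tau> i]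
  unfolding concat_obs_def consistent_def map_le_def
  by (auto simp: map_add_def split: option.splits; metis domI option.inject)

lemma concat_obs_eq_if_consistent:
  assumes "consistent \<phi>' (concat_obs \<sigma> \<tau> m \<phi> i)"
  shows "prun \<sigma> \<phi>' m = prun \<sigma> \<phi> m" "prun \<tau> \<phi>' i = prun \<tau> \<phi> i"
    "concat_obs \<sigma> \<tau> m \<phi>' i = concat_obs \<sigma> \<tau> m \<phi> i"
proof -
  show "prun \<sigma> \<phi>' m = prun \<sigma> \<phi> m"
    using prun_eq_if_consistent consistent_map_le[OF assms prun_map_le_concat_obs] by blast
  moreover show "prun \<tau> \<phi>' i = prun \<tau> \<phi> i"
    using prun_eq_if_consistent consistent_map_le[OF assms] map_le_map_add
    unfolding concat_obs_def by blast
  ultimately show "concat_obs \<sigma> \<tau> m \<phi>' i = concat_obs \<sigma> \<tau> m \<phi> i"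
    by (simp add: concat_obs_def)
qed

definition expect :: "('e::finite \<Rightarrow> 'o::finite) pmf \<Rightarrow> (('e \<Rightarrow> 'o) \<Rightarrow> real) \<Rightarrow> real"
  where "expect p X = (\<Sum>\<phi>\<in>UNIV. pmf p \<phi> * X \<phi>)"

lemma measure_pmf_expectation_eq_expect: "measure_pmf.expectation p X = expect p X"
  unfolding expect_def by (subst integral_measure_pmf[where A = UNIV]) auto

lemma expect_diff: "expect p (\<lambda>\<phi>. X \<phi> - Y \<phi>) = expect p X - expect p Y"
  unfolding expect_def by (simp add: right_diff_distrib sum_subtractf)

lemma expect_sum: "expect p (\<lambda>\<phi>. \<Sum>i\<in>I. X i \<phi>) = (\<Sum>i\<in>I. expect p (X i))"
  unfolding expect_def by (simp add: sum_distrib_left sum.swap[of _ I])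

lemma expect_cmult: "expect p (\<lambda>\<phi>. c * X \<phi>) = c * expect p X"
  unfolding expect_def by (simp add: sum_distrib_left mult.left_commute)

lemma expect_mono: "(\<And>\<phi>. pmf p \<phi> > 0 \<Longrightarrow> X \<phi> \<le> Y \<phi>) \<Longrightarrow> expect p X \<le> expect p Y"
  unfolding expect_def
  by (rule sum_mono) (metis pmf_nonneg mult_left_mono order_le_less mult_zero_left order_refl)

lemma expect_nonneg: "(\<And>\<phi>. pmf p \<phi> > 0 \<Longrightarrow> 0 \<le> X \<phi>) \<Longrightarrow> 0 \<le> expect p X"
  using expect_mono[of p "\<lambda>_. 0" X] by (simp add: expect_def)

lemma prob_cons_eq_sum: "prob_cons p \<psi> = (\<Sum>\<phi>\<in>{\<phi>. consistent \<phi> \<psi>}. pmf p \<phi>)"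
  for p :: "('e::finite \<Rightarrow> 'o::finite) pmf"
  unfolding prob_cons_def by (simp add: measure_measure_pmf_finite)

lemma prob_cons_pos: "consistent \<phi> \<psi> \<Longrightarrow> pmf p \<phi> > 0 \<Longrightarrow> prob_cons p \<psi> > 0"
  for p :: "('e::finite \<Rightarrow> 'o::finite) pmf"
  unfolding prob_cons_eq_sum
  by (rule less_le_trans[of _ "pmf p \<phi>"]) (auto intro!: member_le_sum)

lemma cexp_cong: "(\<And>\<phi>'. consistent \<phi>' \<psi> \<Longrightarrow> X \<phi>' = Y \<phi>') \<Longrightarrow> cexp p \<psi> X = cexp p \<psi> Y"
  unfolding cexp_def by (auto intro!: sum.cong)

text \<open>Tower property: the classes \<open>{\<phi>'. \<Psi> \<phi>' = \<psi>}\<close> are exactly the events \<open>\<Phi> \<sim> \<psi>\<close>.\<close>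

lemma expect_cexp:
  fixes p :: "('e::finite \<Rightarrow> 'o::finite) pmf"
  assumes self: "\<And>\<phi>. consistent \<phi> (\<Psi> \<phi>)"
    and determined: "\<And>\<phi> \<phi>'. consistent \<phi>' (\<Psi> \<phi>) \<Longrightarrow> \<Psi> \<phi>' = \<Psi> \<phi>"
  shows "expect p (\<lambda>\<phi>. cexp p (\<Psi> \<phi>) X) = expect p X"
proof -
  let ?K = "\<lambda>\<psi>. {\<phi>. \<Psi> \<phi> = \<psi>}"
  have cell: "(\<Sum>\<phi>\<in>?K \<psi>. pmf p \<phi>) * cexp p \<psi> X = (\<Sum>\<phi>\<in>?K \<psi>. pmf p \<phi> * X \<phi>)"
    if "\<psi> \<in> range \<Psi>" for \<psi>
  proof -
    from that obtain \<phi>\<^sub>0 where "\<psi> = \<Psi> \<phi>\<^sub>0" by blast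
    then have K: "{\<phi>. consistent \<phi> \<psi>} = ?K \<psi>" using self determined by (auto; metis)
    show ?thesis
    proof (cases "(\<Sum>\<phi>\<in>?K \<psi>. pmf p \<phi>) = 0")
      case True
      then have "\<forall>\<phi>\<in>?K \<psi>. pmf p \<phi> = 0" by (simp add: sum_nonneg_eq_0_iff)
      then show ?thesis using True by simp
    qed (simp add: cexp_def prob_cons_eq_sum K)
  qed
  have "expect p (\<lambda>\<phi>. cexp p (\<Psi> \<phi>) X) = (\<Sum>\<psi>\<in>range \<Psi>. \<Sum>\<phi>\<in>?K \<psi>. pmf p \<phi> * cexp p (\<Psi> \<phi>) X)"
    unfolding expect_def using sum.group[of UNIV "range \<Psi>" \<Psi> "\<lambda>\<phi>. pmf p \<phi> * cexp p (\<Psi> \<phi>) X"] by simp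
  also have "\<dots> = (\<Sum>\<psi>\<in>range \<Psi>. (\<Sum>\<phi>\<in>?K \<psi>. pmf p \<phi>) * cexp p \<psi> X)"
    by (simp add: sum_distrib_right)
  also have "\<dots> = (\<Sum>\<psi>\<in>range \<Psi>. \<Sum>\<phi>\<in>?K \<psi>. pmf p \<phi> * X \<phi>)"
    by (simp add: cell)
  also have "\<dots> = expect p X"
    unfolding expect_def using sum.group[of UNIV "range \<Psi>" \<Psi> "\<lambda>\<phi>. pmf p \<phi> * X \<phi>"] by simp
  finally show ?thesis .
qed

section \<open>Expected gains along a concatenated run\<close>

definition step_gain :: "('e::finite \<Rightarrow> 'o::finite) pmf \<Rightarrow> ('e set \<Rightarrow> ('e \<Rightarrow> 'o) \<Rightarrow> real)
    \<Rightarrow> ('e, 'o) policy \<Rightarrow> ('e, 'o) policy \<Rightarrow> nat \<Rightarrow> nat \<Rightarrow> ('e \<Rightarrow> 'o) \<Rightarrow> real" where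
  "step_gain p f \<sigma> \<tau> m i \<phi> =
     (case \<tau> (prun \<tau> \<phi> i) of
       None \<Rightarrow> 0
     | Some e \<Rightarrow> if e \<in> dom (concat_obs \<sigma> \<tau> m \<phi> i) then 0
                 else favg_marg p f e (concat_obs \<sigma> \<tau> m \<phi> i))"

lemma step_gain_stop_policy:
  "step_gain p f (\<lambda>_. None) \<tau> m i \<phi> =
     (case \<tau> (prun \<tau> \<phi> i) of
       None \<Rightarrow> 0
     | Some e \<Rightarrow> if e \<in> dom (prun \<tau> \<phi> i) then 0 else favg_marg p f e (prun \<tau> \<phi> i))"
  unfolding step_gain_def concat_obs_def prun_stop_policy empty_map_add ..

lemma step_gain_nonneg:
  assumes "adaptive_monotone p f" and "pmf p \<phi> > 0"
  shows "0 \<le> step_gain p f \<sigma> \<tau> m i \<phi>"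
  using assms prob_cons_pos[OF consistent_concat_obs assms(2)]
  unfolding step_gain_def adaptive_monotone_def by (auto split: option.splits)

lemma step_gain_le_marginal:
  assumes "adaptive_submodular p f" and "pmf p \<phi> > 0"
    and "\<tau> (prun \<tau> \<phi> i) = Some e" and "e \<notin> dom (prun \<sigma> \<phi> m) \<union> dom (prun \<tau> \<phi> i)"
  shows "step_gain p f \<sigma> \<tau> m i \<phi> \<le> favg_marg p f e (prun \<sigma> \<phi> m)"
  using assms prob_cons_pos[OF consistent_concat_obs assms(2)] prun_map_le_concat_obs[of \<sigma> \<phi> m \<tau> i]
  unfolding step_gain_def adaptive_submodular_def by (auto simp: dom_concat_obs)

lemma cexp_concat_obs_Suc_diff:
  fixes p :: "('e::finite \<Rightarrow> 'o::finite) pmf"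
  shows "cexp p (concat_obs \<sigma> \<tau> m \<phi> i)
      (\<lambda>\<phi>'. f (dom (concat_obs \<sigma> \<tau> m \<phi>' (Suc i))) \<phi>' - f (dom (concat_obs \<sigma> \<tau> m \<phi>' i)) \<phi>')
    = step_gain p f \<sigma> \<tau> m i \<phi>" (is "cexp p ?C ?Y = _")
proof -
  have Y: "?Y \<phi>' = (case \<tau> (prun \<tau> \<phi> i) of
      None \<Rightarrow> 0 | Some e \<Rightarrow> f (insert e (dom ?C)) \<phi>' - f (dom ?C) \<phi>')"
    if "consistent \<phi>' ?C" for \<phi>'
    using concat_obs_eq_if_consistent[OF that]
    by (auto simp: dom_concat_obs prun_Suc dom_pstep split: option.splits)
  show ?thesis
  proof (cases "\<tau> (prun \<tau> \<phi> i)")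
    case None
    then have "cexp p ?C ?Y = cexp p ?C (\<lambda>_. 0)" by (intro cexp_cong) (simp add: Y)
    then show ?thesis by (simp add: cexp_def step_gain_def None)
  next
    case (Some e)
    show ?thesis
    proof (cases "e \<in> dom ?C")
      case True
      then have "cexp p ?C ?Y = cexp p ?C (\<lambda>_. 0)"
        by (intro cexp_cong) (simp add: Y Some insert_absorb)
      then show ?thesis by (simp add: cexp_def step_gain_def Some True)
    next
      case False
      have "cexp p ?C ?Y = favg_marg p f e ?C"
        unfolding favg_marg_def by (intro cexp_cong) (simp add: Y Some)
      then show ?thesis by (simp add: step_gain_def Some False)
    qed
  qed
qed

lemma expect_concat_obs_Suc:
  fixes p :: "('e::finite \<Rightarrow> 'o::finite) pmf"
  shows "expect p (\<lambda>\<phi>. f (dom (concat_obs \<sigma> \<tau> m \<phi> (Suc i))) \<phi>)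
       = expect p (\<lambda>\<phi>. f (dom (concat_obs \<sigma> \<tau> m \<phi> i)) \<phi>) + expect p (step_gain p f \<sigma> \<tau> m i)"
proof -
  have "expect p (\<lambda>\<phi>. f (dom (concat_obs \<sigma> \<tau> m \<phi> (Suc i))) \<phi> - f (dom (concat_obs \<sigma> \<tau> m \<phi> i)) \<phi>)
      = expect p (\<lambda>\<phi>. cexp p (concat_obs \<sigma> \<tau> m \<phi> i)
          (\<lambda>\<phi>'. f (dom (concat_obs \<sigma> \<tau> m \<phi>' (Suc i))) \<phi>' - f (dom (concat_obs \<sigma> \<tau> m \<phi>' i)) \<phi>'))"
    by (rule expect_cexp[symmetric]) (rule consistent_concat_obs, erule concat_obs_eq_if_consistent(3))
  also have "\<dots> = expect p (step_gain p f \<sigma> \<tau> m i)"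
    unfolding cexp_concat_obs_Suc_diff ..
  finally show ?thesis unfolding expect_diff by simp
qed

lemma expect_union_eq_sum_step_gain:
  fixes p :: "('e::finite \<Rightarrow> 'o::finite) pmf"
  shows "expect p (\<lambda>\<phi>. f (dom (prun \<sigma> \<phi> m) \<union> dom (prun \<tau> \<phi> n)) \<phi>)
       = expect p (\<lambda>\<phi>. f (dom (prun \<sigma> \<phi> m)) \<phi>) + (\<Sum>i<n. expect p (step_gain p f \<sigma> \<tau> m i))"
proof (induction n)
  case (Suc n)
  then show ?case using expect_concat_obs_Suc[of p f \<sigma> \<tau> m n] by (simp add: dom_concat_obs)
qed simp

lemma expect_Esel_le_union:
  fixes p :: "('e::finite \<Rightarrow> 'o::finite) pmf"
  assumes "adaptive_monotone p f"
  shows "expect p (\<lambda>\<phi>. f (Esel \<sigma> \<phi>) \<phi>) \<le> expect p (\<lambda>\<phi>. f (Esel \<sigma> \<phi> \<union> Esel \<tau> \<phi>) \<phi>)"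
proof -
  have "0 \<le> expect p (step_gain p f \<sigma> \<tau> m i)" for m i
    by (rule expect_nonneg) (rule step_gain_nonneg[OF assms])
  then show ?thesis
    unfolding Esel_def expect_union_eq_sum_step_gain by (simp add: sum_nonneg)
qed

lemma sum_step_gain_le_marginals:
  assumes sub: "adaptive_submodular p f" and pos: "pmf p \<phi> > 0"
  shows "(\<Sum>i<n. step_gain p f \<sigma> \<tau> m i \<phi>)
     \<le> (\<Sum>e\<in>dom (prun \<tau> \<phi> n) - dom (prun \<sigma> \<phi> m). favg_marg p f e (prun \<sigma> \<phi> m))"
proof (induction n)
  case (Suc n)
  let ?A = "dom (prun \<sigma> \<phi> m)" and ?D = "dom (prun \<tau> \<phi> n)"
  show ?case
  proof (cases "\<tau> (prun \<tau> \<phi> n)")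
    case None
    then show ?thesis using Suc by (simp add: prun_Suc dom_pstep step_gain_def)
  next
    case (Some e)
    show ?thesis
    proof (cases "e \<in> ?A \<union> ?D")
      case True
      then have "insert e ?D - ?A = ?D - ?A" by auto
      then show ?thesis
        using Suc True by (simp add: prun_Suc dom_pstep Some step_gain_def dom_concat_obs)
    next
      case False
      then have "insert e ?D - ?A = insert e (?D - ?A)" by auto
      then show ?thesis
        using Suc False step_gain_le_marginal[OF sub pos, where \<tau> = \<tau> and i = n and \<sigma> = \<sigma> and m = m, OF Some]
        by (simp add: prun_Suc dom_pstep Some)
    qed
  qed
qed simp

lemma cum_0 [simp]: "cum c 0 = 0"
  by (simp add: cum_def)

lemma cum_Suc: "cum c (Suc z) = cum c z + c (Suc z)"
  by (simp add: cum_def)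

lemma cum_mono: "y \<le> z \<Longrightarrow> cum c y \<le> cum c z"
  unfolding cum_def by (rule sum_mono2) auto

lemma cum_pred: "1 \<le> z \<Longrightarrow> cum c z = cum c (z - 1) + c z"
  using cum_Suc[of c "z - 1"] by simp

lemma round_of_eqI:
  assumes "1 \<le> z" "cum c (z - 1) \<le> t" "t < cum c z"
  shows "round_of c t = z"
  unfolding round_of_def
proof (rule Least_equality)
  fix y assume "t < cum c y"
  then show "z \<le> y" using assms cum_mono[of y "z - 1" c] by linarith
qed fact

lemma sum_rounds:
  fixes h :: "nat \<Rightarrow> 'a::comm_monoid_add"
  shows "(\<Sum>z\<in>{1..b}. \<Sum>t\<in>{cum c (z - 1)..<cum c z}. h t) = (\<Sum>t<cum c b. h t)"
proof (induction b)
  case (Suc b)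
  then show ?case
    using sum.atLeastLessThan_concat[of 0 "cum c b" "cum c (Suc b)" h]
    by (simp add: cum_Suc atLeast0LessThan)
qed simp

lemma sum_le_mult_sum_if_dominated:
  fixes v :: "'a \<Rightarrow> real" and h :: "'b \<Rightarrow> real" and c :: real
  assumes "finite S" "finite I" "card S \<le> c * card I"
    and dom: "\<And>e t. e \<in> S \<Longrightarrow> t \<in> I \<Longrightarrow> v e \<le> h t" and nonneg: "\<And>t. t \<in> I \<Longrightarrow> 0 \<le> h t"
  shows "sum v S \<le> c * sum h I"
proof (cases "I = {}")
  case False
  have "card I * sum v S = (\<Sum>e\<in>S. \<Sum>t\<in>I. v e)"
    by (simp add: sum_distrib_left)
  also have "\<dots> \<le> (\<Sum>e\<in>S. sum h I)"
    by (intro sum_mono) (use dom in auto)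
  also have "\<dots> = card S * sum h I"
    by simp
  also have "\<dots> \<le> (c * card I) * sum h I"
    using assms(3) by (intro mult_right_mono sum_nonneg nonneg) auto
  finally have "card I * sum v S \<le> card I * (c * sum h I)"
    by (simp add: algebra_simps)
  then show ?thesis
    using False \<open>finite I\<close> by (simp add: mult_le_cancel_left_pos card_gt_0_iff)
qed (use assms in simp)

section \<open>The greedy meta-round policy\<close>

lemma greedy_policy_choice:
  assumes "greedy_policy p b Ez g c \<sigma>" "pmf p \<phi> > 0"
    and "z \<in> {1..b}" "cum c (z - 1) \<le> t" "t < cum c z"
  obtains e where "\<sigma> (prun \<sigma> \<phi> t) = Some e" "e \<in> Ez z - dom (prun \<sigma> \<phi> t)"
    "\<And>e'. e' \<in> Ez z - dom (prun \<sigma> \<phi> t) \<Longrightarrow> g (prun \<sigma> \<phi> t) e' \<le> g (prun \<sigma> \<phi> t) e"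
proof -
  have "t < cum c b" using assms(3,5) cum_mono[of z b c] by simp
  moreover have "round_of c t = z" using assms(3-5) by (intro round_of_eqI) auto
  ultimately show ?thesis using assms(1,2) that unfolding greedy_policy_def Let_def by metis
qed

lemma greedy_policy_length:
  fixes \<sigma> :: "('e::finite, 'o) policy"
  assumes "greedy_policy p b Ez g c \<sigma>" "pmf p \<phi> > 0"
  shows "cum c b \<le> card (UNIV :: 'e set)"
proof -
  have "card (dom (prun \<sigma> \<phi> (cum c b))) = cum c b"
    using assms unfolding greedy_policy_def Let_def by (intro card_dom_prun) blast
  then show ?thesis by (metis card_mono finite subset_UNIV)
qed

text \<open>At each step of meta-round \<open>z\<close> the greedy rule preferred its choice to the still
  available item \<open>e\<close>, whose marginal can only shrink later by submodularity.\<close>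

lemma greedy_step_gain_ge_marginal:
  assumes sub: "adaptive_submodular p f"
    and greedy: "greedy_policy p b Ez (\<lambda>\<psi> e. favg_marg p f e \<psi>) c \<sigma>" and pos: "pmf p \<phi> > 0"
    and T: "cum c b \<le> T" and z: "z \<in> {1..b}" and t: "cum c (z - 1) \<le> t" "t < cum c z"
    and e: "e \<in> Ez z" "e \<notin> dom (prun \<sigma> \<phi> T)"
  shows "favg_marg p f e (prun \<sigma> \<phi> T) \<le> step_gain p f (\<lambda>_. None) \<sigma> T t \<phi>"
proof -
  obtain e' where e': "\<sigma> (prun \<sigma> \<phi> t) = Some e'" "e' \<in> Ez z - dom (prun \<sigma> \<phi> t)"
    "\<And>e''. e'' \<in> Ez z - dom (prun \<sigma> \<phi> t) \<Longrightarrow> favg_marg p f e'' (prun \<sigma> \<phi> t) \<le> favg_marg p f e' (prun \<sigma> \<phi> t)"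
    using greedy_policy_choice[OF greedy pos z t] by blast
  have "t \<le> T" using t T cum_mono[of z b c] z by simp
  then have le: "prun \<sigma> \<phi> t \<subseteq>\<^sub>m prun \<sigma> \<phi> T" by (rule prun_map_le)
  then have "e \<notin> dom (prun \<sigma> \<phi> t)" using e map_le_implies_dom_le by blast
  have "favg_marg p f e (prun \<sigma> \<phi> T) \<le> favg_marg p f e (prun \<sigma> \<phi> t)"
    using sub le prob_cons_pos[OF consistent_prun pos] e unfolding adaptive_submodular_def by blast
  also have "\<dots> \<le> favg_marg p f e' (prun \<sigma> \<phi> t)"
    using e'(3) e \<open>e \<notin> dom (prun \<sigma> \<phi> t)\<close> by blast
  also have "\<dots> = step_gain p f (\<lambda>_. None) \<sigma> T t \<phi>"
    using e' by (simp add: step_gain_stop_policy)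
  finally show ?thesis .
qed

lemma greedy_marginals_le_twice_gains:
  assumes disj: "\<forall>z\<in>{1..b}. \<forall>z'\<in>{1..b}. z \<noteq> z' \<longrightarrow> Ez z \<inter> Ez z' = {}"
    and cover: "(\<Union>z\<in>{1..b}. Ez z) = UNIV"
    and mono: "adaptive_monotone p f" and sub: "adaptive_submodular p f"
    and greedy: "greedy_policy p b Ez (\<lambda>\<psi> e. favg_marg p f e \<psi>) c \<sigma>"
    and indep: "pm_indep b Ez k S" and cap: "\<forall>z\<in>{1..b}. k z \<le> 2 * c z"
    and pos: "pmf p \<phi> > 0" and T: "cum c b \<le> T"
  shows "(\<Sum>e\<in>S - dom (prun \<sigma> \<phi> T). favg_marg p f e (prun \<sigma> \<phi> T))
    \<le> 2 * (\<Sum>t<T. step_gain p f (\<lambda>_. None) \<sigma> T t \<phi>)"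
proof -
  let ?A = "dom (prun \<sigma> \<phi> T)"
  let ?v = "\<lambda>e. favg_marg p f e (prun \<sigma> \<phi> T)" and ?h = "\<lambda>t. step_gain p f (\<lambda>_. None) \<sigma> T t \<phi>"
  let ?R = "\<lambda>z. {cum c (z - 1)..<cum c z}"
  have h_nonneg: "0 \<le> ?h t" for t by (rule step_gain_nonneg[OF mono pos])
  have round: "(\<Sum>e\<in>(S - ?A) \<inter> Ez z. ?v e) \<le> 2 * (\<Sum>t\<in>?R z. ?h t)" if z: "z \<in> {1..b}" for z
  proof (rule sum_le_mult_sum_if_dominated)
    have "card ((S - ?A) \<inter> Ez z) \<le> card (S \<inter> Ez z)" by (rule card_mono) auto
    also have "\<dots> \<le> 2 * c z" using indep cap z unfolding pm_indep_def by (meson le_trans)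
    finally show "real (card ((S - ?A) \<inter> Ez z)) \<le> 2 * real (card (?R z))"
      using cum_pred[of z c] z by simp
  qed (use greedy_step_gain_ge_marginal[OF sub greedy pos T z] h_nonneg in auto)
  have "(\<Sum>e\<in>S - ?A. ?v e) = (\<Sum>e\<in>(\<Union>z\<in>{1..b}. (S - ?A) \<inter> Ez z). ?v e)"
    using cover by (intro sum.cong) auto
  also have "\<dots> = (\<Sum>z\<in>{1..b}. \<Sum>e\<in>(S - ?A) \<inter> Ez z. ?v e)"
    by (rule sum.UNION_disjoint) (use disj in auto)
  also have "\<dots> \<le> (\<Sum>z\<in>{1..b}. 2 * (\<Sum>t\<in>?R z. ?h t))"
    by (rule sum_mono) (rule round)
  also have "\<dots> = 2 * (\<Sum>t<cum c b. ?h t)"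
    unfolding sum_distrib_left[symmetric] sum_rounds ..
  also have "\<dots> \<le> 2 * (\<Sum>t<T. ?h t)"
    using T h_nonneg by (simp add: sum_mono2)
  finally show ?thesis .
qed

lemma expect_union_le_greedy:
  fixes p :: "('e::finite \<Rightarrow> 'o::finite) pmf" and \<sigma> \<pi> :: "('e, 'o) policy"
  assumes disj: "\<forall>z\<in>{1..b}. \<forall>z'\<in>{1..b}. z \<noteq> z' \<longrightarrow> Ez z \<inter> Ez z' = {}"
    and cover: "(\<Union>z\<in>{1..b}. Ez z) = UNIV"
    and mono: "adaptive_monotone p f" and sub: "adaptive_submodular p f"
    and greedy: "greedy_policy p b Ez (\<lambda>\<psi> e. favg_marg p f e \<psi>) c \<sigma>"
    and feas: "feasible_policy p b Ez k \<pi>" and cap: "\<forall>z\<in>{1..b}. k z \<le> 2 * c z"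
  shows "expect p (\<lambda>\<phi>. f (Esel \<sigma> \<phi> \<union> Esel \<pi> \<phi>) \<phi>)
    \<le> 3 * expect p (\<lambda>\<phi>. f (Esel \<sigma> \<phi>) \<phi>) - 2 * expect p (\<lambda>\<phi>. f {} \<phi>)"
proof -
  define T where "T = card (UNIV :: 'e set)"
  define gain where "gain \<tau> \<tau>' = (\<Sum>i<T. expect p (step_gain p f \<tau> \<tau>' T i))" for \<tau> \<tau>'
  have "gain \<sigma> \<pi> \<le> 2 * gain (\<lambda>_. None) \<sigma>"
    unfolding gain_def expect_sum[symmetric] expect_cmult[symmetric]
  proof (rule expect_mono)
    fix \<phi> assume pos: "pmf p \<phi> > 0"
    have indep: "pm_indep b Ez k (dom (prun \<pi> \<phi> T))"
      using feas pos unfolding feasible_policy_def Esel_def T_def by blast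
    have len: "cum c b \<le> T"
      unfolding T_def by (rule greedy_policy_length[OF greedy pos])
    have "(\<Sum>i<T. step_gain p f \<sigma> \<pi> T i \<phi>)
        \<le> (\<Sum>e\<in>dom (prun \<pi> \<phi> T) - dom (prun \<sigma> \<phi> T). favg_marg p f e (prun \<sigma> \<phi> T))"
      by (rule sum_step_gain_le_marginals[OF sub pos])
    also have "\<dots> \<le> 2 * (\<Sum>t<T. step_gain p f (\<lambda>_. None) \<sigma> T t \<phi>)"
      by (rule greedy_marginals_le_twice_gains[OF disj cover mono sub greedy indep cap pos len])
    finally show "(\<Sum>i<T. step_gain p f \<sigma> \<pi> T i \<phi>) \<le> 2 * (\<Sum>t<T. step_gain p f (\<lambda>_. None) \<sigma> T t \<phi>)" .
  qed
  moreover have "expect p (\<lambda>\<phi>. f (Esel \<sigma> \<phi> \<union> Esel \<pi> \<phi>) \<phi>)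
      = expect p (\<lambda>\<phi>. f (Esel \<sigma> \<phi>) \<phi>) + gain \<sigma> \<pi>"
    unfolding gain_def Esel_def T_def by (rule expect_union_eq_sum_step_gain)
  moreover have "expect p (\<lambda>\<phi>. f (Esel \<sigma> \<phi>) \<phi>) = expect p (\<lambda>\<phi>. f {} \<phi>) + gain (\<lambda>_. None) \<sigma>"
    using expect_union_eq_sum_step_gain[of p f "\<lambda>_. None" T \<sigma> T]
    unfolding gain_def Esel_def T_def by (simp add: prun_stop_policy)
  ultimately show ?thesis by linarith
qed

theorem lemma2:
  fixes p :: "('e::finite \<Rightarrow> 'o::finite) pmf"
    and f :: "'e set \<Rightarrow> ('e \<Rightarrow> 'o) \<Rightarrow> real"
    and b :: nat and Ez :: "nat \<Rightarrow> 'e set" and k :: "nat \<Rightarrow> nat"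
    and \<pi>mw \<pi>ma \<pi> :: "('e, 'o) policy"
  assumes disj: "\<forall>z\<in>{1..b}. \<forall>z'\<in>{1..b}. z \<noteq> z' \<longrightarrow> Ez z \<inter> Ez z' = {}"
    and cover: "(\<Union>z\<in>{1..b}. Ez z) = UNIV"
    and kpos: "\<forall>z\<in>{1..b}. 0 < k z \<and> k z \<le> card (Ez z)"
    and nonneg: "\<forall>S \<phi>. f S \<phi> \<ge> 0"
    and mono: "adaptive_monotone p f"
    and submod: "adaptive_submodular p f"
    and mw: "greedy_policy p b Ez (\<lambda>\<psi> e. fwc_marg p f e \<psi>) (\<lambda>z. k z div 2) \<pi>mw"
    and ma: "greedy_policy p b Ez (\<lambda>\<psi> e. favg_marg p f e \<psi>) (\<lambda>z. (k z + 1) div 2) \<pi>ma"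
    and feas: "feasible_policy p b Ez k \<pi>"
  shows "favg_pol p f \<pi> \<le> 3 * favg_concat p f \<pi>mw \<pi>ma"
proof -
  have cap: "\<forall>z\<in>{1..b}. k z \<le> 2 * ((k z + 1) div 2)" by (intro ballI) presburger
  have "favg_pol p f \<pi> \<le> expect p (\<lambda>\<phi>. f (Esel \<pi>ma \<phi> \<union> Esel \<pi> \<phi>) \<phi>)"
    using expect_Esel_le_union[OF mono, of \<pi> \<pi>ma]
    unfolding favg_pol_def measure_pmf_expectation_eq_expect by (simp add: Un_commute)
  also have "\<dots> \<le> 3 * expect p (\<lambda>\<phi>. f (Esel \<pi>ma \<phi>) \<phi>) - 2 * expect p (\<lambda>\<phi>. f {} \<phi>)"
    by (rule expect_union_le_greedy[OF disj cover mono submod ma feas cap])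
  also have "\<dots> \<le> 3 * expect p (\<lambda>\<phi>. f (Esel \<pi>ma \<phi>) \<phi>)"
    using nonneg by (simp add: expect_nonneg)
  also have "\<dots> \<le> 3 * favg_concat p f \<pi>mw \<pi>ma"
    using expect_Esel_le_union[OF mono, of \<pi>ma \<pi>mw]
    unfolding favg_concat_def measure_pmf_expectation_eq_expect by (simp add: Un_commute)
  finally show ?thesis .
qed

end
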